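(* Let $k$ be an algebraically closed field of arbitrary characteristic. Fix integers $d_2\ge d_1>0$, a smooth quadric $Q\subset\mathbb{P}^3$, lines $L\in|\mathcal{O}_Q(1,0)|$ and $L'\in|\mathcal{O}_Q(0,1)|$, and let $\{q\}=L\cap L'$. Fix $o\in L\setminus\{q\}$ and $o'\in L'\setminus\{q\}$. Let $Z\subset L$ be the effective divisor $d_2\cdot o$ of $L$ and $Z'\subset L'$ the effective divisor $d_1\cdot o'$ of $L'$, regarded as zero-dimensional subschemes of $Q$ of degrees $d_2$ and $d_1$ respectively. Then there is a smooth divisor $Y\in|\mathcal{O}_Q(d_1,d_2)|$ such that $Y\cap L=Z$ and $Y\cap L'=Z'$ (in particular, set-theoretically $Y$ meets $L$ only at $o$ and $L'$ only at $o'$).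
   Context: $\mathcal{O}_Q(a,b)$ denotes the line bundle of bidegree $(a,b)$ on $Q\cong\mathbb{P}^1\times\mathbb{P}^1$; a curve in $|\mathcal{O}_Q(d_1,d_2)|$ meets a line of $|\mathcal{O}_Q(1,0)|$ in degree $d_2$ and a line of $|\mathcal{O}_Q(0,1)|$ in degree $d_1$. *)

theory Defs
  imports "HOL-Computational_Algebra.Polynomial"
begin

text \<open>Q = P^1 x P^1 with bihomogeneous coordinates ((x0,x1),(y0,y1)).
A divisor of bidegree (d1,d2) is the zero scheme of a nonzero form
F = sum_{i<=d1, j<=d2} c i j * x0^i x1^(d1-i) y0^j y1^(d2-j).\<close>

definition alg_closed_field :: "'a::field itself \<Rightarrow> bool" where
  "alg_closed_field _ \<longleftrightarrow> (\<forall>p::'a poly. degree p > 0 \<longrightarrow> (\<exists>x. poly p x = 0))"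

definition P1pt :: "'a::field \<times> 'a \<Rightarrow> bool" where
  "P1pt v \<longleftrightarrow> v \<noteq> (0, 0)"

definition P1eq :: "'a::field \<times> 'a \<Rightarrow> 'a \<times> 'a \<Rightarrow> bool" where
  "P1eq u v \<longleftrightarrow> fst u * snd v = snd u * fst v"

definition bihom :: "(nat \<Rightarrow> nat \<Rightarrow> 'a::field) \<Rightarrow> nat \<Rightarrow> nat \<Rightarrow> 'a \<times> 'a \<Rightarrow> 'a \<times> 'a \<Rightarrow> 'a" where
  "bihom c d1 d2 x y = (\<Sum>i\<le>d1. \<Sum>j\<le>d2. c i j * fst x ^ i * snd x ^ (d1 - i)
                                                 * fst y ^ j * snd y ^ (d2 - j))"

definition dx0 :: "(nat \<Rightarrow> nat \<Rightarrow> 'a::field) \<Rightarrow> nat \<Rightarrow> nat \<Rightarrow> 'a \<times> 'a \<Rightarrow> 'a \<times> 'a \<Rightarrow> 'a" where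
  "dx0 c d1 d2 x y = (\<Sum>i\<le>d1. \<Sum>j\<le>d2. c i j * of_nat i * fst x ^ (i - 1) * snd x ^ (d1 - i)
                                                 * fst y ^ j * snd y ^ (d2 - j))"

definition dx1 :: "(nat \<Rightarrow> nat \<Rightarrow> 'a::field) \<Rightarrow> nat \<Rightarrow> nat \<Rightarrow> 'a \<times> 'a \<Rightarrow> 'a \<times> 'a \<Rightarrow> 'a" where
  "dx1 c d1 d2 x y = (\<Sum>i\<le>d1. \<Sum>j\<le>d2. c i j * fst x ^ i * of_nat (d1 - i) * snd x ^ (d1 - i - 1)
                                                 * fst y ^ j * snd y ^ (d2 - j))"

definition dy0 :: "(nat \<Rightarrow> nat \<Rightarrow> 'a::field) \<Rightarrow> nat \<Rightarrow> nat \<Rightarrow> 'a \<times> 'a \<Rightarrow> 'a \<times> 'a \<Rightarrow> 'a" where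
  "dy0 c d1 d2 x y = (\<Sum>i\<le>d1. \<Sum>j\<le>d2. c i j * fst x ^ i * snd x ^ (d1 - i)
                                                 * of_nat j * fst y ^ (j - 1) * snd y ^ (d2 - j))"

definition dy1 :: "(nat \<Rightarrow> nat \<Rightarrow> 'a::field) \<Rightarrow> nat \<Rightarrow> nat \<Rightarrow> 'a \<times> 'a \<Rightarrow> 'a \<times> 'a \<Rightarrow> 'a" where
  "dy1 c d1 d2 x y = (\<Sum>i\<le>d1. \<Sum>j\<le>d2. c i j * fst x ^ i * snd x ^ (d1 - i)
                                                 * fst y ^ j * of_nat (d2 - j) * snd y ^ (d2 - j - 1))"

text \<open>The form is nonzero and its zero scheme is smooth (Jacobian criterion:
no point of P^1 x P^1 where F and all four partials vanish).\<close>
definition smooth_bidivisor :: "(nat \<Rightarrow> nat \<Rightarrow> 'a::field) \<Rightarrow> nat \<Rightarrow> nat \<Rightarrow> bool" where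
  "smooth_bidivisor c d1 d2 \<longleftrightarrow>
     (\<exists>i\<le>d1. \<exists>j\<le>d2. c i j \<noteq> 0) \<and>
     (\<forall>x y. P1pt x \<longrightarrow> P1pt y \<longrightarrow>
        \<not> (bihom c d1 d2 x y = 0 \<and> dx0 c d1 d2 x y = 0 \<and> dx1 c d1 d2 x y = 0
             \<and> dy0 c d1 d2 x y = 0 \<and> dy1 c d1 d2 x y = 0))"

definition lin_at :: "'a::field \<times> 'a \<Rightarrow> 'a \<times> 'a \<Rightarrow> 'a" where
  "lin_at s y = snd s * fst y - fst s * snd y"

end

theory Submission
  imports Defs
begin

text \<open>
  Write L = {p} x P^1 and L' = P^1 x {p'}, so o = (p, s) and o' = (t, p'). Take
  F(x, y) = (lin_at t x)^d1 (lin_at s y)^d2 + eps R(x) Q(y), where R is a product of d1 distinct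
  linear forms of the pencil spanned by lin_at t and lin_at p, one of them lin_at p, and Q is the
  analogous product of d2 forms with a factor lin_at p'. As R(p) = 0 and Q(p') = 0, F restricts
  to L and L' as required, whatever eps is.

  At a singular point (x, y) the derivative of F along t vanishes, and since lin_at t is constant
  in that direction it is eps Q(y) times the derivative of R. If lin_at t x = 0, then R(x) is a
  nonzero power of lin_at p x, so Q(y) = 0 and the derivative along s makes y a double root of Q,
  which has distinct roots. Otherwise x and y dehomogenize to critical points of R and Q, and
  F(x, y) = 0 says that eps = -1/(R Q) at these points. There are only finitely many such critical
  values, and the infinite field k has an eps avoiding them.
\<close>

lemma alg_closed_field_infinite:
  assumes "alg_closed_field TYPE('a::field)"
  shows "infinite (UNIV :: 'a set)"
proof
  assume fin: "finite (UNIV :: 'a set)"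
  define P :: "'a poly" where "P = (\<Prod>a\<in>UNIV. [:- a, 1:])"
  have "P \<noteq> 0" unfolding P_def using fin by (simp add: prod_zero_iff)
  then have "degree (pCons 1 P) > 0" by simp
  then obtain x where "poly (pCons 1 P) x = 0"
    using assms unfolding alg_closed_field_def by blast
  moreover have "poly P x = 0"
    unfolding P_def poly_prod using fin by (simp add: prod_zero_iff)
  ultimately show False by simp
qed

lemma poly_eqI_infinite:
  fixes P Q :: "'a::field poly"
  assumes "infinite (UNIV :: 'a set)" and "\<And>z. poly P z = poly Q z"
  shows "P = Q"
proof (rule ccontr)
  assume "P \<noteq> Q"
  then have "finite {z. poly (P - Q) z = 0}" by (intro poly_roots_finite) simp
  moreover have "{z. poly (P - Q) z = 0} = UNIV" using assms(2) by auto
  ultimately show False using assms(1) by simp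
qed

lemma coeff_1_eq_pderiv_0: "coeff p 1 = poly (pderiv p) 0"
  by (simp add: poly_0_coeff_0 coeff_pderiv)

lemma coeff_1_pcompose_linear: "coeff (pcompose p [:a, b:]) 1 = b * poly (pderiv p) a"
  unfolding coeff_1_eq_pderiv_0 by (simp add: pderiv_pcompose poly_pcompose pderiv_pCons)

lemma coeff_1_power_mult_power:
  fixes a b a' b' :: "'a::field"
  shows "coeff ([:a, b:] ^ i * [:a', b':] ^ m) 1
     = a ^ i * (of_nat m * a' ^ (m - 1) * b') + of_nat i * a ^ (i - 1) * b * a' ^ m"
  unfolding coeff_1_eq_pderiv_0 by (simp add: pderiv_mult pderiv_power pderiv_pCons algebra_simps)

lemma infinite_ex_distinct_Cons:
  assumes "infinite (UNIV :: 'a set)"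
  shows "\<exists>xs :: 'a list. distinct (a # xs) \<and> length xs = n"
proof -
  have "infinite (UNIV - {a})" using assms by simp
  then obtain S where S: "finite S" "card S = n" "S \<subseteq> UNIV - {a}"
    using infinite_arbitrarily_large by blast
  then obtain xs where "set xs = S" "distinct xs" using finite_distinct_list by blast
  then show ?thesis using S by (auto simp: distinct_card)
qed

lemma ex_nonzero_avoiding_inverses:
  fixes \<phi> \<psi> :: "'b \<Rightarrow> 'a::field"
  assumes "infinite (UNIV :: 'a set)" "finite A" "finite B"
  shows "\<exists>e. e \<noteq> 0 \<and> (\<forall>a\<in>A. \<forall>b\<in>B. 1 + e * (\<phi> a * \<psi> b) \<noteq> 0)"
proof -
  let ?bad = "(\<lambda>(a, b). - 1 / (\<phi> a * \<psi> b)) ` (A \<times> B)"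
  have "finite (insert 0 ?bad)" using assms by simp
  then obtain e where e: "e \<notin> insert 0 ?bad" using ex_new_if_finite[OF assms(1)] by blast
  have "1 + e * (\<phi> a * \<psi> b) \<noteq> 0" if "a \<in> A" "b \<in> B" for a b
  proof
    assume "1 + e * (\<phi> a * \<psi> b) = 0"
    then have "e * (\<phi> a * \<psi> b) = - 1" by (simp add: eq_neg_iff_add_eq_0 add.commute)
    then have "e = - 1 / (\<phi> a * \<psi> b)" by (cases "\<phi> a * \<psi> b = 0") (simp_all add: field_simps)
    then show False using e that by auto
  qed
  then show ?thesis using e by blast
qed

definition root_poly :: "'a::field list \<Rightarrow> 'a poly" where
  "root_poly rs = (\<Prod>r\<leftarrow>rs. [:- r, 1:])"

lemma poly_root_poly: "poly (root_poly rs) z = (\<Prod>r\<leftarrow>rs. z - r)"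
  unfolding root_poly_def by (induction rs) (auto simp: algebra_simps)

lemma root_poly_eq_0_iff: "poly (root_poly rs) z = 0 \<longleftrightarrow> z \<in> set rs"
  unfolding poly_root_poly by (induction rs) auto

lemma pderiv_root_poly_nonzero_at_root:
  assumes "distinct rs" and "poly (root_poly rs) z = 0"
  shows "poly (pderiv (root_poly rs)) z \<noteq> 0"
  using assms
proof (induction rs)
  case Nil
  then show ?case by (simp add: root_poly_def)
next
  case (Cons r rs)
  have factor: "root_poly (r # rs) = [:- r, 1:] * root_poly rs" by (simp add: root_poly_def)
  have deriv: "poly (pderiv (root_poly (r # rs))) z
      = poly (root_poly rs) z + (z - r) * poly (pderiv (root_poly rs)) z"
    unfolding factor pderiv_mult by (simp add: pderiv_pCons algebra_simps)
  show ?case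
  proof (cases "z = r")
    case True
    then show ?thesis using Cons.prems(1) deriv by (simp add: root_poly_eq_0_iff)
  next
    case False
    then show ?thesis using Cons deriv by (simp add: root_poly_def)
  qed
qed

lemma finite_critical_points_root_poly:
  assumes "distinct rs" and "rs \<noteq> []"
  shows "finite {z. poly (pderiv (root_poly rs)) z = 0}"
proof (rule poly_roots_finite)
  obtain r where "r \<in> set rs" using assms(2) by (cases rs) auto
  then show "pderiv (root_poly rs) \<noteq> 0"
    using pderiv_root_poly_nonzero_at_root[OF assms(1)] root_poly_eq_0_iff by fastforce
qed

definition homogenize :: "nat \<Rightarrow> 'a::field poly \<Rightarrow> 'a \<times> 'a \<Rightarrow> 'a" where
  "homogenize d h x = (\<Sum>i\<le>d. coeff h i * fst x ^ i * snd x ^ (d - i))"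

lemma homogenize_snd_nonzero:
  assumes "degree h \<le> d" and "snd x \<noteq> 0"
  shows "homogenize d h x = snd x ^ d * poly h (fst x / snd x)"
proof -
  have "snd x ^ d * poly h (fst x / snd x) = (\<Sum>i\<le>d. snd x ^ d * (coeff h i * (fst x / snd x) ^ i))"
    using assms(1) by (simp add: poly_altdef sum_distrib_left sum.mono_neutral_left coeff_eq_0)
  also have "\<dots> = homogenize d h x"
    unfolding homogenize_def
  proof (intro sum.cong refl)
    fix i assume "i \<in> {..d}"
    then have "snd x ^ d = snd x ^ i * snd x ^ (d - i)" by (simp flip: power_add)
    then show "snd x ^ d * (coeff h i * (fst x / snd x) ^ i) = coeff h i * fst x ^ i * snd x ^ (d - i)"
      using assms(2) by (simp add: power_divide field_simps)
  qed
  finally show ?thesis ..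
qed

lemma homogenize_snd_zero: "homogenize d h (x0, 0) = coeff h d * x0 ^ d"
proof -
  have "homogenize d h (x0, 0) = (\<Sum>i\<le>d. coeff h i * x0 ^ i * 0 ^ (d - i))"
    by (simp add: homogenize_def)
  also have "\<dots> = (\<Sum>i\<in>{d}. coeff h i * x0 ^ i * 0 ^ (d - i))"
    by (rule sum.mono_neutral_right) auto
  finally show ?thesis by simp
qed

lemma coeff_mult_degree_le:
  assumes "degree h \<le> d" and "degree g \<le> e"
  shows "coeff (h * g) (d + e) = coeff h d * coeff g e"
proof (cases "degree h = d \<and> degree g = e")
  case True
  then show ?thesis using coeff_mult_degree_sum[of h g] by simp
next
  case False
  then have "degree h < d \<or> degree g < e" using assms by auto
  moreover have "degree (h * g) \<le> degree h + degree g" by (rule degree_mult_le)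
  ultimately show ?thesis using assms by (auto simp: coeff_eq_0)
qed

lemma homogenize_mult:
  assumes "degree h \<le> d" and "degree g \<le> e"
  shows "homogenize (d + e) (h * g) x = homogenize d h x * homogenize e g x"
proof (cases "snd x = 0")
  case True
  then obtain x0 where "x = (x0, 0)" by (cases x) auto
  then show ?thesis by (simp add: homogenize_snd_zero coeff_mult_degree_le[OF assms] power_add)
next
  case False
  have "degree (h * g) \<le> d + e" using degree_mult_le[of h g] assms by simp
  then show ?thesis using False assms by (simp add: homogenize_snd_nonzero power_add)
qed

definition binary_form :: "nat \<Rightarrow> ('a::field \<times> 'a \<Rightarrow> 'a) \<Rightarrow> bool" where
  "binary_form d f \<longleftrightarrow> (\<exists>h. degree h \<le> d \<and> f = homogenize d h)"

lemma binary_form_lin_at: "binary_form 1 (lin_at r)"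
  unfolding binary_form_def
proof (intro exI conjI)
  show "lin_at r = homogenize 1 [:- fst r, snd r:]"
    by (auto simp: lin_at_def homogenize_def algebra_simps)
qed simp

lemma binary_form_mult:
  assumes "binary_form d f" and "binary_form e g"
  shows "binary_form (d + e) (\<lambda>x. f x * g x)"
proof -
  obtain h k where "degree h \<le> d" "f = homogenize d h" "degree k \<le> e" "g = homogenize e k"
    using assms unfolding binary_form_def by blast
  moreover from this have "degree (h * k) \<le> d + e"
    using degree_mult_le[of h k] by simp
  ultimately show ?thesis
    unfolding binary_form_def by (intro exI[of _ "h * k"]) (auto simp: homogenize_mult)
qed

lemma binary_form_prod_lin_at: "binary_form (length qs) (\<lambda>x. \<Prod>q\<leftarrow>qs. lin_at q x)"
proof (induction qs)
  case Nil
  show ?case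
    unfolding binary_form_def by (intro exI[of _ 1]) (simp add: homogenize_def fun_eq_iff)
next
  case (Cons q qs)
  then show ?case using binary_form_mult[OF binary_form_lin_at] by fastforce
qed

lemma binary_form_lin_at_power: "binary_form n (\<lambda>x. lin_at r x ^ n)"
  using binary_form_prod_lin_at[of "replicate n r"] by simp

lemma bihom_tensor_product:
  "bihom (\<lambda>i j. coeff h i * coeff k j) d1 d2 x y = homogenize d1 h x * homogenize d2 k y"
  unfolding bihom_def homogenize_def sum_product by (simp add: mult_ac)

lemma bihom_add_scaled:
  "bihom (\<lambda>i j. c i j + e * c' i j) d1 d2 x y = bihom c d1 d2 x y + e * bihom c' d1 d2 x y"
  unfolding bihom_def by (simp add: sum.distrib sum_distrib_left algebra_simps)

lemma bihom_pencil:
  assumes "binary_form d1 f" "binary_form d2 g" "binary_form d1 f'" "binary_form d2 g'"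
  shows "\<exists>c. \<forall>x y. bihom c d1 d2 x y = f x * g y + e * (f' x * g' y)"
proof -
  obtain h k h' k' where "f = homogenize d1 h" "g = homogenize d2 k"
    and "f' = homogenize d1 h'" "g' = homogenize d2 k'"
    using assms unfolding binary_form_def by blast
  then have "bihom (\<lambda>i j. coeff h i * coeff k j + e * (coeff h' i * coeff k' j)) d1 d2 x y
      = f x * g y + e * (f' x * g' y)" for x y
    by (simp only: bihom_add_scaled bihom_tensor_product)
  then show ?thesis by blast
qed

definition line_point :: "'a::field \<times> 'a \<Rightarrow> 'a \<times> 'a \<Rightarrow> 'a \<Rightarrow> 'a \<times> 'a" where
  "line_point x w z = (fst x + z * fst w, snd x + z * snd w)"

lemma bihom_line_coeff_1:
  fixes c :: "nat \<Rightarrow> nat \<Rightarrow> 'a::field"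
  assumes "infinite (UNIV :: 'a set)"
    and "\<And>z. poly P z = bihom c d1 d2 (line_point x w z) y"
  shows "coeff P 1 = fst w * dx0 c d1 d2 x y + snd w * dx1 c d1 d2 x y"
proof -
  have "P = (\<Sum>i\<le>d1. \<Sum>j\<le>d2. smult (c i j * fst y ^ j * snd y ^ (d2 - j))
              ([:fst x, fst w:] ^ i * [:snd x, snd w:] ^ (d1 - i)))"
    by (intro poly_eqI_infinite[OF assms(1)])
      (simp add: assms(2) bihom_def line_point_def poly_sum algebra_simps)
  then have "coeff P 1 = (\<Sum>i\<le>d1. \<Sum>j\<le>d2.
      fst w * (c i j * of_nat i * fst x ^ (i - 1) * snd x ^ (d1 - i) * fst y ^ j * snd y ^ (d2 - j))
    + snd w * (c i j * fst x ^ i * of_nat (d1 - i) * snd x ^ (d1 - i - 1) * fst y ^ j * snd y ^ (d2 - j)))"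
    by (simp only: coeff_sum coeff_smult coeff_1_power_mult_power) (simp add: algebra_simps)
  then show ?thesis
    unfolding dx0_def dx1_def by (simp add: sum.distrib sum_distrib_left)
qed

definition singular_point :: "(nat \<Rightarrow> nat \<Rightarrow> 'a::field) \<Rightarrow> nat \<Rightarrow> nat \<Rightarrow> 'a \<times> 'a \<Rightarrow> 'a \<times> 'a \<Rightarrow> bool" where
  "singular_point c d1 d2 x y \<longleftrightarrow>
     bihom c d1 d2 x y = 0 \<and> dx0 c d1 d2 x y = 0 \<and> dx1 c d1 d2 x y = 0
       \<and> dy0 c d1 d2 x y = 0 \<and> dy1 c d1 d2 x y = 0"

lemma smooth_bidivisor_iff:
  "smooth_bidivisor c d1 d2 \<longleftrightarrow> (\<exists>i\<le>d1. \<exists>j\<le>d2. c i j \<noteq> 0)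
     \<and> (\<forall>x y. P1pt x \<longrightarrow> P1pt y \<longrightarrow> \<not> singular_point c d1 d2 x y)"
  unfolding smooth_bidivisor_def singular_point_def ..

lemma bihom_swap: "bihom c d1 d2 x y = bihom (\<lambda>j i. c i j) d2 d1 y x"
  unfolding bihom_def by (subst sum.swap) (simp add: mult_ac)

lemma singular_point_swap: "singular_point c d1 d2 x y \<longleftrightarrow> singular_point (\<lambda>j i. c i j) d2 d1 y x"
proof -
  have "dy0 c d1 d2 x y = dx0 (\<lambda>j i. c i j) d2 d1 y x" "dy1 c d1 d2 x y = dx1 (\<lambda>j i. c i j) d2 d1 y x"
    "dx0 c d1 d2 x y = dy0 (\<lambda>j i. c i j) d2 d1 y x" "dx1 c d1 d2 x y = dy1 (\<lambda>j i. c i j) d2 d1 y x"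
    unfolding dx0_def dx1_def dy0_def dy1_def by (subst sum.swap, simp add: mult_ac)+
  then show ?thesis unfolding singular_point_def by (auto simp: bihom_swap[of c])
qed

lemma lin_at_eq_0_iff: "lin_at s x = 0 \<longleftrightarrow> P1eq s x"
  unfolding lin_at_def P1eq_def by (auto simp: mult.commute)

lemma P1eq_sym: "P1eq s x \<longleftrightarrow> P1eq x s"
  unfolding P1eq_def by (auto simp: mult.commute)

lemma lin_at_self: "lin_at s s = 0"
  by (simp add: lin_at_eq_0_iff P1eq_def mult.commute)

lemma lin_at_line_point: "lin_at s (line_point x w z) = lin_at s x + z * lin_at s w"
  unfolding lin_at_def line_point_def by (simp add: algebra_simps)

lemma lin_at_common_zero:
  assumes "\<not> P1eq t p" "lin_at t x = 0" "lin_at p x = 0"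
  shows "\<not> P1pt x"
proof -
  have "fst x * lin_at t p = fst p * lin_at t x - fst t * lin_at p x"
    "snd x * lin_at t p = snd p * lin_at t x - snd t * lin_at p x"
    by (simp_all add: lin_at_def algebra_simps)
  moreover have "lin_at t p \<noteq> 0" using assms(1) by (simp add: lin_at_eq_0_iff)
  ultimately have "fst x = 0" "snd x = 0" using assms(2,3) by simp_all
  then show ?thesis unfolding P1pt_def by (simp add: prod_eq_iff)
qed

text \<open>The form vanishing at the points p - r t, r in rs; in the coordinates
  (lin_at t, lin_at p) of P^1 it is the homogenization of root_poly rs.\<close>

definition pencil_factor :: "'a::field list \<Rightarrow> 'a \<times> 'a \<Rightarrow> 'a \<times> 'a \<Rightarrow> 'a \<times> 'a \<Rightarrow> 'a" where
  "pencil_factor rs t p x = (\<Prod>r\<leftarrow>rs. lin_at p x - r * lin_at t x)"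

lemma lin_at_combination: "lin_at p x - r * lin_at t x = lin_at (fst p - r * fst t, snd p - r * snd t) x"
  unfolding lin_at_def by (simp add: algebra_simps)

lemma binary_form_pencil_factor: "binary_form (length rs) (pencil_factor rs t p)"
proof -
  have "pencil_factor rs t p
      = (\<lambda>x. \<Prod>q\<leftarrow>map (\<lambda>r. (fst p - r * fst t, snd p - r * snd t)) rs. lin_at q x)"
    by (simp add: fun_eq_iff pencil_factor_def lin_at_combination o_def)
  then show ?thesis
    using binary_form_prod_lin_at[of "map (\<lambda>r. (fst p - r * fst t, snd p - r * snd t)) rs"] by simp
qed

lemma pencil_factor_at_root: "0 \<in> set rs \<Longrightarrow> pencil_factor rs t p p = 0"
  by (force simp: pencil_factor_def lin_at_self prod_list_zero_iff)

lemma pencil_factor_at_t: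
  "lin_at t x = 0 \<Longrightarrow> pencil_factor rs t p x = lin_at p x ^ length rs"
  by (induction rs) (simp_all add: pencil_factor_def)

lemma pencil_factor_dehomogenize:
  assumes "lin_at t x \<noteq> 0"
  shows "pencil_factor rs t p x = lin_at t x ^ length rs * poly (root_poly rs) (lin_at p x / lin_at t x)"
proof (induction rs)
  case Nil
  then show ?case by (simp add: pencil_factor_def root_poly_def)
next
  case (Cons r rs)
  have "lin_at p x - r * lin_at t x = lin_at t x * (lin_at p x / lin_at t x - r)"
    using assms by (simp add: field_simps)
  then show ?case using Cons by (simp add: pencil_factor_def poly_root_poly mult_ac)
qed

locale pencil =
  fixes c :: "nat \<Rightarrow> nat \<Rightarrow> 'a::field" and d1 d2 :: nat
    and t p s p' :: "'a \<times> 'a" and rs qs :: "'a list" and eps :: 'a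
  assumes infinite_field: "infinite (UNIV :: 'a set)"
    and t_p: "\<not> P1eq t p" and s_p': "\<not> P1eq s p'"
    and rs: "distinct rs" "length rs = d1" "0 < d1"
    and qs: "distinct qs" "length qs = d2" "0 < d2"
    and eps_nonzero: "eps \<noteq> 0"
    and eps_generic: "\<And>\<zeta> \<eta>. poly (pderiv (root_poly rs)) \<zeta> = 0 \<Longrightarrow> poly (pderiv (root_poly qs)) \<eta> = 0
      \<Longrightarrow> 1 + eps * (poly (root_poly rs) \<zeta> * poly (root_poly qs) \<eta>) \<noteq> 0"
    and bihom_eq: "\<And>x y. bihom c d1 d2 x y
      = lin_at t x ^ d1 * lin_at s y ^ d2 + eps * (pencil_factor rs t p x * pencil_factor qs s p' y)"
begin

lemma swap: "pencil (\<lambda>j i. c i j) d2 d1 s p' t p qs rs eps"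
proof
  show "bihom (\<lambda>j i. c i j) d2 d1 y x = lin_at s y ^ d2 * lin_at t x ^ d1
      + eps * (pencil_factor qs s p' y * pencil_factor rs t p x)" for y x
    unfolding bihom_swap[of c d1 d2 x y, symmetric] bihom_eq by (simp add: mult_ac)
  show "1 + eps * (poly (root_poly qs) \<eta> * poly (root_poly rs) \<zeta>) \<noteq> 0"
    if "poly (pderiv (root_poly qs)) \<eta> = 0" "poly (pderiv (root_poly rs)) \<zeta> = 0" for \<eta> \<zeta>
    using eps_generic[OF that(2,1)] by (simp add: mult.commute)
qed (use infinite_field t_p s_p' rs qs eps_nonzero in auto)

lemma vanishing_dx_imp_critical:
  assumes u: "lin_at t x \<noteq> 0" and "dx0 c d1 d2 x y = 0" "dx1 c d1 d2 x y = 0"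
  shows "pencil_factor qs s p' y = 0 \<or> poly (pderiv (root_poly rs)) (lin_at p x / lin_at t x) = 0"
proof -
  let ?u = "lin_at t x" and ?a = "lin_at p x" and ?Q = "pencil_factor qs s p' y"
  \<comment> \<open>F restricted to the line through x in direction t, on which lin_at t is constant\<close>
  define P where "P = [:?u ^ d1 * lin_at s y ^ d2:]
      + smult (eps * ?Q * ?u ^ d1) (pcompose (root_poly rs) [:?a / ?u, lin_at p t / ?u:])"
  have "poly P z = bihom c d1 d2 (line_point x t z) y" for z
  proof -
    have "pencil_factor rs t p (line_point x t z)
        = ?u ^ d1 * poly (root_poly rs) (?a / ?u + z * (lin_at p t / ?u))"
      using pencil_factor_dehomogenize[of t "line_point x t z" rs p] u rs(2)
      by (simp add: lin_at_line_point lin_at_self add_divide_distrib)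
    then show ?thesis
      by (simp add: P_def bihom_eq lin_at_line_point lin_at_self poly_pcompose algebra_simps)
  qed
  then have "coeff P 1 = 0" using bihom_line_coeff_1[OF infinite_field] assms(2,3) by simp
  moreover have "coeff P 1 = eps * ?Q * ?u ^ d1 * (lin_at p t / ?u * poly (pderiv (root_poly rs)) (?a / ?u))"
    unfolding P_def coeff_add coeff_smult coeff_1_pcompose_linear by simp
  moreover have "lin_at p t \<noteq> 0" using t_p by (simp add: lin_at_eq_0_iff P1eq_sym)
  ultimately show ?thesis using eps_nonzero u by simp
qed

lemma singular_point_lin_at_nonzero:
  assumes "P1pt x" "P1pt y" "singular_point c d1 d2 x y"
  shows "lin_at t x \<noteq> 0"
proof
  assume u: "lin_at t x = 0"
  interpret swapped: pencil "\<lambda>j i. c i j" d2 d1 s p' t p qs rs eps by (rule swap)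
  have R: "pencil_factor rs t p x \<noteq> 0"
    using pencil_factor_at_t[OF u] lin_at_common_zero[OF t_p u] assms(1) by auto
  have Q: "pencil_factor qs s p' y = 0"
    using assms(3) u R eps_nonzero rs(3) by (simp add: singular_point_def bihom_eq zero_power)
  have v: "lin_at s y \<noteq> 0"
  proof
    assume v: "lin_at s y = 0"
    then have "lin_at p' y = 0" using Q pencil_factor_at_t[OF v] by simp
    then show False using lin_at_common_zero[OF s_p' v] assms(2) by simp
  qed
  let ?\<eta> = "lin_at p' y / lin_at s y"
  have "poly (root_poly qs) ?\<eta> = 0" using Q v pencil_factor_dehomogenize[OF v] by simp
  moreover have "singular_point (\<lambda>j i. c i j) d2 d1 y x" using assms(3) singular_point_swap by blast
  then have "poly (pderiv (root_poly qs)) ?\<eta> = 0"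
    using swapped.vanishing_dx_imp_critical[OF v] R unfolding singular_point_def by blast
  ultimately show False using pderiv_root_poly_nonzero_at_root[OF qs(1)] by blast
qed

lemma no_singular_point:
  assumes "P1pt x" "P1pt y"
  shows "\<not> singular_point c d1 d2 x y"
proof
  assume sing: "singular_point c d1 d2 x y"
  interpret swapped: pencil "\<lambda>j i. c i j" d2 d1 s p' t p qs rs eps by (rule swap)
  have sing': "singular_point (\<lambda>j i. c i j) d2 d1 y x" using sing singular_point_swap by blast
  have u: "lin_at t x \<noteq> 0" using singular_point_lin_at_nonzero assms sing by blast
  have v: "lin_at s y \<noteq> 0" using swapped.singular_point_lin_at_nonzero assms sing' by blast
  define \<zeta> \<eta> where "\<zeta> = lin_at p x / lin_at t x" and "\<eta> = lin_at p' y / lin_at s y"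
  have R: "pencil_factor rs t p x = lin_at t x ^ d1 * poly (root_poly rs) \<zeta>"
    using pencil_factor_dehomogenize[OF u] rs(2) unfolding \<zeta>_def by simp
  have Q: "pencil_factor qs s p' y = lin_at s y ^ d2 * poly (root_poly qs) \<eta>"
    using pencil_factor_dehomogenize[OF v] qs(2) unfolding \<eta>_def by simp
  have "lin_at t x ^ d1 * lin_at s y ^ d2 * (1 + eps * (poly (root_poly rs) \<zeta> * poly (root_poly qs) \<eta>)) = 0"
    using sing unfolding singular_point_def bihom_eq R Q by (simp add: algebra_simps)
  then have critical_value: "1 + eps * (poly (root_poly rs) \<zeta> * poly (root_poly qs) \<eta>) = 0"
    using u v by simp
  then have "pencil_factor rs t p x \<noteq> 0" "pencil_factor qs s p' y \<noteq> 0"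
    using R Q u v by auto
  then have "poly (pderiv (root_poly rs)) \<zeta> = 0" "poly (pderiv (root_poly qs)) \<eta> = 0"
    using vanishing_dx_imp_critical[OF u, of y] swapped.vanishing_dx_imp_critical[OF v, of x] sing sing'
    unfolding singular_point_def \<zeta>_def \<eta>_def by blast+
  then show False using eps_generic critical_value by blast
qed

lemma smooth: "smooth_bidivisor c d1 d2"
  unfolding smooth_bidivisor_iff
proof (intro conjI allI impI)
  show "\<exists>i\<le>d1. \<exists>j\<le>d2. c i j \<noteq> 0"
  proof (rule ccontr)
    assume "\<not> ?thesis"
    then have "bihom c d1 d2 t s = 0" by (simp add: bihom_def)
    moreover have "pencil_factor rs t p t \<noteq> 0" "pencil_factor qs s p' s \<noteq> 0"
      using t_p s_p' by (simp_all add: pencil_factor_at_t lin_at_self lin_at_eq_0_iff P1eq_sym)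
    ultimately show False using bihom_eq[of t s] eps_nonzero rs(3) by (simp add: lin_at_self zero_power)
  qed
qed (simp add: no_singular_point)

end

lemma ex_pencil:
  fixes t p s p' :: "'a::field \<times> 'a"
  assumes "infinite (UNIV :: 'a set)" "\<not> P1eq t p" "\<not> P1eq s p'" "0 < d1" "0 < d2"
  shows "\<exists>c rs qs eps. pencil c d1 d2 t p s p' rs qs eps \<and> 0 \<in> set rs \<and> 0 \<in> set qs"
proof -
  obtain als bes :: "'a list" where als: "distinct (0 # als)" "length als = d1 - 1"
    and bes: "distinct (0 # bes)" "length bes = d2 - 1"
    using infinite_ex_distinct_Cons[OF assms(1)] by meson
  let ?rs = "0 # als" and ?qs = "0 # bes"
  have lengths: "length ?rs = d1" "length ?qs = d2" using als bes assms(4,5) by simp_all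
  obtain eps :: 'a where eps: "eps \<noteq> 0"
    "\<forall>\<zeta>\<in>{z. poly (pderiv (root_poly ?rs)) z = 0}. \<forall>\<eta>\<in>{z. poly (pderiv (root_poly ?qs)) z = 0}.
       1 + eps * (poly (root_poly ?rs) \<zeta> * poly (root_poly ?qs) \<eta>) \<noteq> 0"
    using ex_nonzero_avoiding_inverses[where \<phi> = "poly (root_poly ?rs)" and \<psi> = "poly (root_poly ?qs)",
        OF assms(1) finite_critical_points_root_poly finite_critical_points_root_poly] als(1) bes(1)
    by blast
  have "binary_form d1 (pencil_factor ?rs t p)" "binary_form d2 (pencil_factor ?qs s p')"
    using binary_form_pencil_factor[of ?rs t p] binary_form_pencil_factor[of ?qs s p'] lengths
    by simp_all
  then obtain c where c: "\<forall>x y. bihom c d1 d2 x y = lin_at t x ^ d1 * lin_at s y ^ d2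
      + eps * (pencil_factor ?rs t p x * pencil_factor ?qs s p' y)"
    using bihom_pencil[OF binary_form_lin_at_power[where r = t] binary_form_lin_at_power[where r = s]]
    by blast
  have "pencil c d1 d2 t p s p' ?rs ?qs eps"
    by unfold_locales (use assms als(1) bes(1) lengths eps c in auto)
  then show ?thesis by (meson list.set_intros(1))
qed

theorem theorem4p3:
  fixes p p' s t :: "'a::field \<times> 'a" and d1 d2 :: nat
  assumes "alg_closed_field TYPE('a)"
    and "0 < d1" and "d1 \<le> d2"
    and "P1pt p" and "P1pt p'" and "P1pt s" and "P1pt t"
    and "\<not> P1eq s p'" and "\<not> P1eq t p"
  shows "\<exists>c :: nat \<Rightarrow> nat \<Rightarrow> 'a.
           smooth_bidivisor c d1 d2
         \<and> (\<exists>lam. lam \<noteq> 0 \<and> (\<forall>y. bihom c d1 d2 p y = lam * lin_at s y ^ d2))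
         \<and> (\<exists>mu. mu \<noteq> 0 \<and> (\<forall>x. bihom c d1 d2 x p' = mu * lin_at t x ^ d1))"
proof -
  have "0 < d2" using assms(2,3) by simp
  then obtain c rs qs eps where "pencil c d1 d2 t p s p' rs qs eps" "0 \<in> set rs" "0 \<in> set qs"
    using ex_pencil[OF alg_closed_field_infinite[OF assms(1)] assms(9,8,2)] by blast
  then interpret pencil c d1 d2 t p s p' rs qs eps by simp
  show ?thesis
  proof (intro exI conjI allI)
    show "smooth_bidivisor c d1 d2" by (rule smooth)
    show "lin_at t p ^ d1 \<noteq> 0" "lin_at s p' ^ d2 \<noteq> 0"
      using assms(8,9) by (simp_all add: lin_at_eq_0_iff)
    show "bihom c d1 d2 p y = lin_at t p ^ d1 * lin_at s y ^ d2" for y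
      using bihom_eq pencil_factor_at_root[OF \<open>0 \<in> set rs\<close>] by simp
    show "bihom c d1 d2 x p' = lin_at s p' ^ d2 * lin_at t x ^ d1" for x
      using bihom_eq pencil_factor_at_root[OF \<open>0 \<in> set qs\<close>] by (simp add: mult.commute)
  qed
qed

end
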